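(* Let $(\mathcal{X},\kappa)$ be a finite similarity space with Gram matrix $\mathbf{K}$, let $\mathcal{Y}$ be a finite set, and let $(X,Y)$ be a random pair with values in $\mathcal{X}\times\mathcal{Y}$, with marginal law $\mathbb{P}_y$ of $Y$. Then for any such kernel $\kappa$, $$\mathbb{H}^{\mathbf{K},\mathbf{I}}[X\mid Y]=\mathbb{E}_{y\sim\mathbb{P}_y}\big[\mathbb{H}^{\mathbf{K}}[X\mid Y=y]\big].$$
   Context: A finite similarity space $(\mathcal{X},\kappa)$ is a finite set with a symmetric $\kappa:\mathcal{X}\times\mathcal{X}\to[0,1]$ with $\kappa(x,x)=1$; its Gram matrix is $\mathbf{K}_{x,y}=\kappa(x,y)$. For a distribution $\mathbb{P}$ on $\mathcal{X}$, $(\mathbf{K}\mathbb{P})(x)=\sum_y\kappa(x,y)\mathbb{P}(y)$ and the GAIT entropy is $\mathbb{H}^{\mathbf{K}}[\mathbb{P}]=-\sum_x\mathbb{P}(x)\log(\mathbf{K}\mathbb{P})(x)$ (with $0\log0=0$). $\mathbf{I}$ denotes the identity kernel on $\mathcal{Y}$ ($\iota(y,y')=1$ if $y=y'$, else $0$). For kernels $\kappa$ on $\mathcal{X}$ and $\lambda$ on $\mathcal{Y}$ with Gram matrices $\mathbf{K},\mathbf{\Lambda}$, the joint entropy $\mathbb{H}^{\mathbf{K}\otimes\mathbf{\Lambda}}[X,Y]$ is the GAIT entropy of the joint law of $(X,Y)$ with respect to the product kernel $\kappa(x,x')\lambda(y,y')$, and the conditional entropy is $\mathbb{H}^{\mathbf{K},\mathbf{\Lambda}}[X\mid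 Y]=\mathbb{H}^{\mathbf{K}\otimes\mathbf{\Lambda}}[X,Y]-\mathbb{H}^{\mathbf{\Lambda}}[Y]$. $\mathbb{H}^{\mathbf{K}}[X\mid Y=y]$ denotes the GAIT entropy of the conditional law of $X$ given $Y=y$. *)

theory Defs
  imports "HOL-Analysis.Analysis"
begin

definition similarity_kernel :: "('a::finite \<Rightarrow> 'a \<Rightarrow> real) \<Rightarrow> bool" where
  "similarity_kernel k \<longleftrightarrow>
     (\<forall>x y. k x y = k y x) \<and> (\<forall>x y. 0 \<le> k x y \<and> k x y \<le> 1) \<and> (\<forall>x. k x x = 1)"

definition is_distribution :: "('a::finite \<Rightarrow> real) \<Rightarrow> bool" where
  "is_distribution P \<longleftrightarrow> (\<forall>x. 0 \<le> P x) \<and> (\<Sum>x\<in>UNIV. P x) = 1"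

definition kernel_apply :: "('a::finite \<Rightarrow> 'a \<Rightarrow> real) \<Rightarrow> ('a \<Rightarrow> real) \<Rightarrow> 'a \<Rightarrow> real" where
  "kernel_apply k P x = (\<Sum>y\<in>UNIV. k x y * P y)"

text \<open>GAIT entropy; terms with P x = 0 vanish (0 log 0 = 0 convention,
automatic since 0 * t = 0).\<close>
definition gait_entropy :: "('a::finite \<Rightarrow> 'a \<Rightarrow> real) \<Rightarrow> ('a \<Rightarrow> real) \<Rightarrow> real" where
  "gait_entropy k P = - (\<Sum>x\<in>UNIV. P x * ln (kernel_apply k P x))"

definition id_kernel :: "'a \<Rightarrow> 'a \<Rightarrow> real" where
  "id_kernel y y' = (if y = y' then 1 else 0)"

definition prod_kernel :: "('a \<Rightarrow> 'a \<Rightarrow> real) \<Rightarrow> ('b \<Rightarrow> 'b \<Rightarrow> real)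
    \<Rightarrow> ('a \<times> 'b) \<Rightarrow> ('a \<times> 'b) \<Rightarrow> real" where
  "prod_kernel k l p q = k (fst p) (fst q) * l (snd p) (snd q)"

definition marg_snd :: "('a::finite \<times> 'b \<Rightarrow> real) \<Rightarrow> 'b \<Rightarrow> real" where
  "marg_snd P y = (\<Sum>x\<in>UNIV. P (x, y))"

text \<open>Conditional law of X given Y = y (meaningful when the marginal of y is positive).\<close>
definition cond_law :: "('a::finite \<times> 'b \<Rightarrow> real) \<Rightarrow> 'b \<Rightarrow> 'a \<Rightarrow> real" where
  "cond_law P y x = P (x, y) / marg_snd P y"

definition gait_cond_entropy :: "('a::finite \<Rightarrow> 'a \<Rightarrow> real) \<Rightarrow> ('b::finite \<Rightarrow> 'b \<Rightarrow> real)
    \<Rightarrow> ('a \<times> 'b \<Rightarrow> real) \<Rightarrow> real" where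
  "gait_cond_entropy k l P = gait_entropy (prod_kernel k l) P - gait_entropy l (marg_snd P)"

end

theory Submission
  imports Defs
begin

text \<open>Against the identity kernel on the label, the joint entropy splits into the
unnormalised entropies of the slices x \<mapsto> P(x, y). Each slice is its mass m(y) times the
conditional law, and rescaling a law by m(y) > 0 multiplies its GAIT entropy by m(y) and
shifts it by -m(y) ln m(y); these shifts are exactly the Shannon entropy of the label,
which is the GAIT entropy of the marginal for the identity kernel.\<close>

lemma kernel_apply_id_kernel: "kernel_apply id_kernel Q y = Q y"
  by (simp add: kernel_apply_def id_kernel_def of_bool_def[symmetric])

lemma gait_entropy_id_kernel: "gait_entropy id_kernel Q = - (\<Sum>y\<in>UNIV. Q y * ln (Q y))"
  by (simp add: gait_entropy_def kernel_apply_id_kernel)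

lemma kernel_apply_prod_id_kernel:
  "kernel_apply (prod_kernel k id_kernel) P (x, y) = kernel_apply k (\<lambda>x'. P (x', y)) x"
proof -
  have "kernel_apply (prod_kernel k id_kernel) P (x, y)
      = (\<Sum>x'\<in>UNIV. k x x' * kernel_apply id_kernel (\<lambda>y'. P (x', y')) y)"
    unfolding kernel_apply_def prod_kernel_def UNIV_Times_UNIV[symmetric] sum.cartesian_product'
    by (simp add: sum_distrib_left mult.assoc)
  also have "\<dots> = (\<Sum>x'\<in>UNIV. k x x' * P (x', y))"
    by (simp add: kernel_apply_id_kernel)
  finally show ?thesis
    by (simp add: kernel_apply_def)
qed

lemma gait_entropy_prod_id_kernel:
  "gait_entropy (prod_kernel k id_kernel) P = (\<Sum>y\<in>UNIV. gait_entropy k (\<lambda>x. P (x, y)))"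
  unfolding gait_entropy_def UNIV_Times_UNIV[symmetric] sum.cartesian_product'
  by (subst sum.swap) (simp add: kernel_apply_prod_id_kernel flip: sum_negf)

lemma kernel_apply_scale: "kernel_apply k (\<lambda>x. c * Q x) x = c * kernel_apply k Q x"
  by (simp add: kernel_apply_def sum_distrib_left algebra_simps)

lemma kernel_apply_pos:
  assumes "\<And>x y. 0 \<le> k x y" and "0 < k x x" and "\<And>y. 0 \<le> Q y" and "0 < Q x"
  shows "0 < kernel_apply k Q x"
proof -
  have "0 < k x x * Q x"
    using assms by simp
  also have "\<dots> \<le> kernel_apply k Q x"
    unfolding kernel_apply_def by (rule member_le_sum) (auto intro: assms mult_nonneg_nonneg)
  finally show ?thesis .
qed

lemma gait_entropy_scale:
  assumes "\<And>x y. 0 \<le> k x y" and "\<And>x. 0 < k x x" and "\<And>x. 0 \<le> Q x" and "0 < c"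
  shows "gait_entropy k (\<lambda>x. c * Q x)
       = c * gait_entropy k Q - c * (\<Sum>x\<in>UNIV. Q x) * ln c"
proof -
  have "c * Q x * ln (kernel_apply k (\<lambda>x. c * Q x) x)
      = c * (Q x * ln (kernel_apply k Q x)) + c * Q x * ln c" for x
  proof (cases "Q x = 0")
    case False
    then have "0 < kernel_apply k Q x"
      using assms by (intro kernel_apply_pos) (auto simp: order_less_le)
    then show ?thesis
      using \<open>0 < c\<close> by (simp add: kernel_apply_scale ln_mult algebra_simps)
  qed simp
  then show ?thesis
    by (simp add: gait_entropy_def sum.distrib sum_distrib_left sum_distrib_right algebra_simps)
qed

lemma gait_entropy_slice:
  fixes P :: "'x::finite \<times> 'y::finite \<Rightarrow> real"
  assumes "\<And>x y. 0 \<le> k x y" and "\<And>x. 0 < k x x" and "\<And>p. 0 \<le> P p"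
  shows "gait_entropy k (\<lambda>x. P (x, y)) + marg_snd P y * ln (marg_snd P y)
       = marg_snd P y * gait_entropy k (cond_law P y)"
proof (cases "marg_snd P y = 0")
  case True
  then have "P (x, y) = 0" for x
    using assms(3) by (simp add: marg_snd_def sum_nonneg_eq_0_iff)
  then show ?thesis
    using True by (simp add: gait_entropy_def)
next
  case False
  define m where "m = marg_snd P y"
  have "0 < m"
    using False assms(3) by (simp add: m_def marg_snd_def order_less_le sum_nonneg)
  have slice: "(\<lambda>x. P (x, y)) = (\<lambda>x. m * cond_law P y x)"
    using \<open>0 < m\<close> by (simp add: cond_law_def m_def)
  have "(\<Sum>x\<in>UNIV. cond_law P y x) = 1"
    using \<open>0 < m\<close> by (simp add: cond_law_def m_def marg_snd_def flip: sum_divide_distrib)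
  moreover have "gait_entropy k (\<lambda>x. m * cond_law P y x)
      = m * gait_entropy k (cond_law P y) - m * (\<Sum>x\<in>UNIV. cond_law P y x) * ln m"
    using \<open>0 < m\<close> assms by (intro gait_entropy_scale) (simp_all add: cond_law_def m_def)
  ultimately show ?thesis
    unfolding slice m_def[symmetric] by simp
qed

theorem theorem4:
  fixes k :: "'x::finite \<Rightarrow> 'x \<Rightarrow> real"
    and P :: "'x \<times> 'y::finite \<Rightarrow> real"
  assumes "similarity_kernel k"
    and "is_distribution P"
  shows "gait_cond_entropy k id_kernel P =
         (\<Sum>y\<in>UNIV. marg_snd P y * gait_entropy k (cond_law P y))"
proof -
  have "\<And>x y. 0 \<le> k x y" and "\<And>x. 0 < k x x"
    using assms(1) by (simp_all add: similarity_kernel_def)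
  moreover have "\<And>p. 0 \<le> P p"
    using assms(2) by (simp add: is_distribution_def split_paired_all)
  ultimately have "marg_snd P y * gait_entropy k (cond_law P y)
      = gait_entropy k (\<lambda>x. P (x, y)) + marg_snd P y * ln (marg_snd P y)" for y
    by (simp add: gait_entropy_slice)
  then show ?thesis
    by (simp add: gait_cond_entropy_def gait_entropy_prod_id_kernel gait_entropy_id_kernel
        sum.distrib)
qed

end
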